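(* Let $a,b>0$ with $a\in[30,\tfrac43b]$. Then $$\Big|\mathbb E_{x\sim\mathcal N(b,1)}\big[-\tfrac12\tanh''(ax)a^2+\tanh'(ax)ax\big]\Big|\le0.01.$$ *)

theory Defs
  imports "HOL-Probability.Probability"
begin

end

theory Submission imports Defs begin

text \<open>Writing \<open>y = a x\<close>, the integrand is \<open>(a\<^sup>2 tanh y + y) sech\<^sup>2 y\<close>. It is bounded
  pointwise by \<open>0.005 exp (3 (x - b)\<^sup>2 / 8)\<close>, a weight that turns the \<open>N(b,1)\<close> density into
  \<open>0.01\<close> times the \<open>N(b,2)\<close> density. For \<open>x \<ge> b/4\<close> we have \<open>y \<ge> 3a\<^sup>2/16 \<ge> 168\<close>, and
  \<open>sech\<^sup>2 y \<le> 4 exp (-2y)\<close> makes the integrand tiny. For \<open>x < b/4\<close> the integrand is at most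
  \<open>a\<^sup>2 + 1\<close>, while the weight exceeds \<open>exp (27 b\<^sup>2 / 128)\<close> and \<open>a \<le> 4b/3\<close>.\<close>

lemma exp_ge_power_div:
  fixes z :: real
  assumes "0 \<le> z"
  shows "(z / real n) ^ n \<le> exp z"
proof (cases "n = 0")
  case False
  have "z / real n \<le> exp (z / real n)"
    using exp_ge_add_one_self[of "z / real n"] by linarith
  then have "(z / real n) ^ n \<le> exp (z / real n) ^ n"
    using assms by (intro power_mono) auto
  also have "\<dots> = exp z"
    using False by (simp flip: exp_of_nat_mult)
  finally show ?thesis .
qed (simp add: assms)

lemma deriv_tanh_real: "deriv tanh = (\<lambda>y::real. 1 - tanh y ^ 2)"
proof
  fix y :: real
  show "deriv tanh y = 1 - tanh y ^ 2"
    by (rule DERIV_imp_deriv) (auto intro!: derivative_eq_intros)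
qed

lemma deriv2_tanh_real: "deriv (deriv tanh) = (\<lambda>y::real. - 2 * tanh y * (1 - tanh y ^ 2))"
proof
  fix y :: real
  show "deriv (deriv tanh) y = - 2 * tanh y * (1 - tanh y ^ 2)"
    unfolding deriv_tanh_real
    by (rule DERIV_imp_deriv)
      (auto intro!: derivative_eq_intros simp: power2_eq_square algebra_simps)
qed

lemma one_minus_tanh_sq_real: "1 - tanh (y::real) ^ 2 = 1 / cosh y ^ 2"
proof -
  have "1 - tanh y ^ 2 = (cosh y ^ 2 - sinh y ^ 2) / cosh y ^ 2"
    by (simp add: tanh_def power_divide field_simps)
  then show ?thesis
    by (simp add: cosh_square_eq)
qed

lemma one_minus_tanh_sq_nonneg: "0 \<le> 1 - tanh (y::real) ^ 2"
  by (simp add: one_minus_tanh_sq_real)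

lemma one_minus_tanh_sq_le_exp: "1 - tanh (y::real) ^ 2 \<le> 4 / exp (2 * \<bar>y\<bar>)"
proof -
  have "exp \<bar>y\<bar> \<le> 2 * cosh y"
    by (cases "y \<ge> 0") (simp_all add: cosh_def)
  then have "exp \<bar>y\<bar> ^ 2 \<le> (2 * cosh y) ^ 2"
    by (intro power_mono) auto
  then have "exp (2 * \<bar>y\<bar>) \<le> 4 * cosh y ^ 2"
    by (simp add: power_mult_distrib flip: exp_of_nat_mult)
  then show ?thesis
    by (simp add: one_minus_tanh_sq_real field_simps)
qed

lemma abs_mult_one_minus_tanh_sq_le_one: "\<bar>y * (1 - tanh (y::real) ^ 2)\<bar> \<le> 1"
proof -
  have "4 * \<bar>y\<bar> \<le> (1 + \<bar>y\<bar>) ^ 2"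
    using zero_le_power2[of "\<bar>y\<bar> - 1"] by (simp add: power2_eq_square algebra_simps)
  also have "\<dots> \<le> exp \<bar>y\<bar> ^ 2"
    by (intro power_mono exp_ge_add_one_self) simp
  also have "\<dots> = exp (2 * \<bar>y\<bar>)"
    by (simp flip: exp_of_nat_mult)
  finally have "\<bar>y\<bar> * (4 / exp (2 * \<bar>y\<bar>)) \<le> 1"
    by (simp add: field_simps)
  moreover have "\<bar>y\<bar> * (1 - tanh y ^ 2) \<le> \<bar>y\<bar> * (4 / exp (2 * \<bar>y\<bar>))"
    by (intro mult_left_mono one_minus_tanh_sq_le_exp) simp
  ultimately have "\<bar>y\<bar> * (1 - tanh y ^ 2) \<le> 1"
    by linarith
  then show ?thesis
    using one_minus_tanh_sq_nonneg[of y] by (simp add: abs_mult)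
qed

lemma abs_tanh_weighted_le:
  fixes c y :: real
  assumes "0 \<le> c"
  shows "\<bar>(c * tanh y + y) * (1 - tanh y ^ 2)\<bar> \<le> c + 1"
proof -
  have "\<bar>tanh y\<bar> * (1 - tanh y ^ 2) \<le> 1"
    using tanh_real_bounds[of y] one_minus_tanh_sq_nonneg[of y] by (intro mult_le_one) auto
  then have "\<bar>c * tanh y * (1 - tanh y ^ 2)\<bar> \<le> c"
    using mult_left_le[OF _ assms] one_minus_tanh_sq_nonneg[of y] assms
    by (simp add: abs_mult mult.assoc)
  then show ?thesis
    using abs_mult_one_minus_tanh_sq_le_one[of y] by (simp add: distrib_right)
qed

lemma abs_tanh_weighted_le_tail:
  fixes c y :: real
  assumes "0 \<le> c" and "c \<le> 16/3 * y" and "168 \<le> y"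
  shows "\<bar>(c * tanh y + y) * (1 - tanh y ^ 2)\<bar> \<le> 0.005"
proof -
  have "\<bar>(c * tanh y + y) * (1 - tanh y ^ 2)\<bar> \<le> (c + y) * (1 - tanh y ^ 2)"
    using assms tanh_real_bounds[of y] one_minus_tanh_sq_nonneg[of y]
    by (auto simp: abs_mult
        intro!: mult_right_mono abs_triangle_ineq[THEN order.trans] mult_left_le)
  also have "\<dots> \<le> (19/3 * y) * (4 / exp (2 * y))"
    using assms one_minus_tanh_sq_le_exp[of y] one_minus_tanh_sq_nonneg[of y]
    by (intro mult_mono) auto
  also have "\<dots> \<le> 0.005"
  proof -
    have "y * 168 ^ 3 \<le> y * y ^ 3"
      using assms by (intro mult_left_mono power_mono) auto
    also have "\<dots> = 16 * (2 * y / real 4) ^ 4"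
      by (simp add: power_divide power4_eq_xxxx power3_eq_cube)
    also have "\<dots> \<le> 16 * exp (2 * y)"
      using assms by (intro mult_left_mono exp_ge_power_div) auto
    finally show ?thesis
      using assms by (simp add: divide_le_eq)
  qed
  finally show ?thesis .
qed

lemma sq_add_one_le_gaussian_weight:
  fixes a b x :: real
  assumes "30 \<le> a" and "a \<le> 4/3 * b" and "x < b/4"
  shows "a\<^sup>2 + 1 \<le> 0.005 * exp (3 * (x - b)\<^sup>2 / 8)"
proof -
  define z where "z = 27 * b\<^sup>2 / 128"
  have "(3/4 * b)\<^sup>2 \<le> (b - x)\<^sup>2"
    using assms by (intro power_mono) auto
  then have weight_ge: "exp z \<le> exp (3 * (x - b)\<^sup>2 / 8)"
    by (simp add: z_def power2_commute power_mult_distrib power_divide)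
  have "a\<^sup>2 \<le> (4/3 * b)\<^sup>2"
    using assms by (intro power_mono) auto
  then have a_sq: "a\<^sup>2 \<le> 2048/243 * z"
    by (simp add: z_def power_mult_distrib power_divide)
  have "(45/2)\<^sup>2 \<le> b\<^sup>2"
    using assms by (intro power_mono) auto
  then have z_ge: "102 \<le> z"
    by (simp add: z_def power_divide)
  have "z * 102 ^ 3 \<le> z * z ^ 3"
    using z_ge by (intro mult_left_mono power_mono) auto
  also have "\<dots> = 256 * (z / real 4) ^ 4"
    by (simp add: power_divide power4_eq_xxxx power3_eq_cube)
  also have "\<dots> \<le> 256 * exp z"
    using z_ge by (intro mult_left_mono exp_ge_power_div) auto
  finally have "200 * (a\<^sup>2 + 1) \<le> exp z"
    using a_sq z_ge by simp
  then have "200 * (a\<^sup>2 + 1) \<le> exp (3 * (x - b)\<^sup>2 / 8)"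
    using weight_ge by linarith
  then show ?thesis
    by simp
qed

lemma abs_tanh_integrand_le_gaussian_weight:
  fixes a b x :: real
  assumes "30 \<le> a" and "a \<le> 4/3 * b"
  shows "\<bar>(a\<^sup>2 * tanh (a * x) + a * x) * (1 - tanh (a * x) ^ 2)\<bar>
           \<le> 0.005 * exp (3 * (x - b)\<^sup>2 / 8)"
proof (cases "x < b/4")
  case True
  then show ?thesis
    using abs_tanh_weighted_le[of "a\<^sup>2" "a * x"] sq_add_one_le_gaussian_weight[OF assms True]
    by simp
next
  case False
  have "a * (3/16 * a) \<le> a * x"
    using assms False by (intro mult_left_mono) auto
  then have "3/16 * a\<^sup>2 \<le> a * x"
    by (simp add: power2_eq_square)
  moreover have "30\<^sup>2 \<le> a\<^sup>2"
    using assms by (intro power_mono) auto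
  ultimately have "\<bar>(a\<^sup>2 * tanh (a * x) + a * x) * (1 - tanh (a * x) ^ 2)\<bar> \<le> 0.005"
    by (intro abs_tanh_weighted_le_tail) auto
  also have "\<dots> \<le> 0.005 * exp (3 * (x - b)\<^sup>2 / 8)"
    by simp
  finally show ?thesis .
qed

lemma normal_density_one_mult_exp:
  "normal_density \<mu> 1 x * exp (3 * (x - \<mu>)\<^sup>2 / 8) = 2 * normal_density \<mu> 2 x"
proof -
  have "sqrt (2 * pi * 2\<^sup>2) = 2 * sqrt (2 * pi)"
    using real_sqrt_mult[of "2 * pi" "2\<^sup>2"] by simp
  moreover have "exp (- (x - \<mu>)\<^sup>2 / 2) * exp (3 * (x - \<mu>)\<^sup>2 / 8) = exp (- (x - \<mu>)\<^sup>2 / 8)"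
    by (simp flip: exp_add)
  ultimately show ?thesis
    by (simp add: normal_density_def)
qed

lemma abs_integral_density_le:
  fixes f d g :: "'a \<Rightarrow> real"
  assumes [measurable]: "f \<in> borel_measurable M" "d \<in> borel_measurable M"
    and "\<And>x. 0 \<le> d x" and "integrable M g" and "\<And>x. d x * \<bar>f x\<bar> \<le> g x"
  shows "\<bar>\<integral>x. f x \<partial>density M d\<bar> \<le> (\<integral>x. g x \<partial>M)"
proof -
  have bound: "norm (d x * f x) \<le> g x" for x
    using assms(3,5) by (simp add: abs_mult)
  have integrable: "integrable M (\<lambda>x. d x * f x)"
  proof (rule Bochner_Integration.integrable_bound[OF assms(4)])
    show "AE x in M. norm (d x * f x) \<le> norm (g x)"
      using bound by (intro AE_I2) (auto intro: order.trans abs_ge_self)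
  qed measurable
  have "\<bar>\<integral>x. f x \<partial>density M d\<bar> = norm (\<integral>x. d x * f x \<partial>M)"
    using assms(3) by (simp add: integral_density)
  also have "\<dots> \<le> (\<integral>x. norm (d x * f x) \<partial>M)"
    by (rule integral_norm_bound)
  also have "\<dots> \<le> (\<integral>x. g x \<partial>M)"
    using integrable assms(4) bound by (intro integral_mono) auto
  finally show ?thesis .
qed

theorem lemmaF5:
  fixes a b :: real
  assumes "a > 0" and "b > 0" and "30 \<le> a" and "a \<le> 4 / 3 * b"
  shows "\<bar>\<integral>x. (- (1/2) * deriv (deriv tanh) (a * x) * a\<^sup>2 + deriv tanh (a * x) * a * x)
            \<partial>(density lborel (normal_density b 1))\<bar> \<le> 0.01"
proof -
  define F where "F x = (a\<^sup>2 * tanh (a * x) + a * x) * (1 - tanh (a * x) ^ 2)" for x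
  have integrand_eq:
    "(\<lambda>x. - (1/2) * deriv (deriv tanh) (a * x) * a\<^sup>2 + deriv tanh (a * x) * a * x) = F"
    unfolding deriv2_tanh_real by (simp add: F_def deriv_tanh_real fun_eq_iff algebra_simps)
  have "F \<in> borel_measurable borel"
    unfolding F_def by (intro borel_measurable_continuous_onI continuous_intros) auto
  moreover have "normal_density b 1 x * \<bar>F x\<bar> \<le> 0.01 * normal_density b 2 x" for x
  proof -
    have "normal_density b 1 x * \<bar>F x\<bar>
            \<le> normal_density b 1 x * (0.005 * exp (3 * (x - b)\<^sup>2 / 8))"
      unfolding F_def using abs_tanh_integrand_le_gaussian_weight[OF assms(3,4)]
      by (intro mult_left_mono) auto
    then show ?thesis
      by (simp add: normal_density_one_mult_exp)
  qed
  ultimately have "\<bar>\<integral>x. F x \<partial>density lborel (normal_density b 1)\<bar>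
                    \<le> (\<integral>x. 0.01 * normal_density b 2 x \<partial>lborel)"
    by (intro abs_integral_density_le) auto
  then show ?thesis
    unfolding integrand_eq by simp
qed

end
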